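(* Let $a\ge 2$ be even, and let $(c,d)\in\mathcal{B}$ with $c\ge 0$ and $c+d\ge 1$. Then $U=\{(a,-a),(c,d)\}\subseteq\mathcal{B}$ is unavoidable.
   Context: The bicyclic inverse semigroup is $\mathcal{B}=\{(a,b)\in\mathbb{Z}\times\mathbb{Z}\mid a\ge 0,\ a+b\ge 0\}$ with multiplication $(a,b)(c,d)=(\max\{c+d,a\}-d,\ b+d)$. A subset $U\subseteq\mathcal{B}$ is called avoidable if $\mathcal{B}$ can be partitioned into two subsets $A$ and $B$ such that no element of $U$ can be written as a product $xy$ of two distinct elements $x\neq y$ both in $A$, or both in $B$. A set is unavoidable if it is not avoidable. *)

theory Defs
  imports Main
begin

definition bicyclic :: "(int \<times> int) set" where
  "bicyclic = {(a, b). a \<ge> 0 \<and> a + b \<ge> 0}"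

definition bmult :: "int \<times> int \<Rightarrow> int \<times> int \<Rightarrow> int \<times> int" where
  "bmult x y = (case x of (a, b) \<Rightarrow> case y of (c, d) \<Rightarrow> (max (c + d) a - d, b + d))"

definition avoidable :: "(int \<times> int) set \<Rightarrow> bool" where
  "avoidable U \<longleftrightarrow> (\<exists>A B. A \<union> B = bicyclic \<and> A \<inter> B = {} \<and>
     (\<forall>u\<in>U. \<forall>x y. x \<noteq> y \<and> ((x \<in> A \<and> y \<in> A) \<or> (x \<in> B \<and> y \<in> B)) \<longrightarrow> bmult x y \<noteq> u))"

definition unavoidable :: "(int \<times> int) set \<Rightarrow> bool" where
  "unavoidable U \<longleftrightarrow> \<not> avoidable U"

end

theory Submission
  imports Defs
begin

text \<open>Writing \<open>a = 2h\<close>, the three elements \<open>(h, -h)\<close>, \<open>(h + 1, -h)\<close> and \<open>(c, d + h)\<close>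
of the bicyclic semigroup multiply pairwise (in this order) to \<open>(a, -a)\<close> and \<open>(c, d)\<close>.
Any partition of the semigroup into two classes puts two of these three elements into
the same class, so the set cannot be avoided.\<close>

lemma unavoidable_if_triangle:
  assumes "x \<in> bicyclic" "y \<in> bicyclic" "z \<in> bicyclic"
    and "x \<noteq> y" "x \<noteq> z" "y \<noteq> z"
    and "bmult x y \<in> U" "bmult x z \<in> U" "bmult y z \<in> U"
  shows "unavoidable U"
  unfolding unavoidable_def avoidable_def
proof
  assume "\<exists>A B. A \<union> B = bicyclic \<and> A \<inter> B = {} \<and>
    (\<forall>u\<in>U. \<forall>x y. x \<noteq> y \<and> ((x \<in> A \<and> y \<in> A) \<or> (x \<in> B \<and> y \<in> B)) \<longrightarrow> bmult x y \<noteq> u)"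
  then obtain A B where cover: "A \<union> B = bicyclic" and
    avoids: "\<forall>u\<in>U. \<forall>x y. x \<noteq> y \<and> ((x \<in> A \<and> y \<in> A) \<or> (x \<in> B \<and> y \<in> B)) \<longrightarrow> bmult x y \<noteq> u"
    by blast
  have "\<not> ((x \<in> A \<and> y \<in> A) \<or> (x \<in> B \<and> y \<in> B))"
    "\<not> ((x \<in> A \<and> z \<in> A) \<or> (x \<in> B \<and> z \<in> B))"
    "\<not> ((y \<in> A \<and> z \<in> A) \<or> (y \<in> B \<and> z \<in> B))"
    using avoids assms(4-9) by blast+
  then show False using assms(1-3) cover by blast
qed

lemma bmult_diag_succ:
  assumes "h \<ge> 1"
  shows "bmult (h, -h) (h + 1, -h) = (2 * h, - (2 * h))"
  using assms by (simp add: bmult_def max_def)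

lemma bmult_diag_shift:
  assumes "c + d \<ge> 0"
  shows "bmult (h, -h) (c, d + h) = (c, d)"
  using assms by (simp add: bmult_def max_def)

lemma bmult_diag_succ_shift:
  assumes "c + d \<ge> 1"
  shows "bmult (h + 1, -h) (c, d + h) = (c, d)"
  using assms by (simp add: bmult_def max_def)

theorem lemma3p1:
  fixes a c d :: int
  assumes "a \<ge> 2" and "even a"
    and "(c, d) \<in> bicyclic" and "c \<ge> 0" and "c + d \<ge> 1"
  shows "unavoidable {(a, -a), (c, d)}"
proof -
  obtain h where a: "a = 2 * h" using \<open>even a\<close> by (auto elim: evenE)
  with \<open>a \<ge> 2\<close> have "h \<ge> 1" by simp
  show ?thesis
  proof (rule unavoidable_if_triangle[of "(h, -h)" "(h + 1, -h)" "(c, d + h)"])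
    show "(h, -h) \<in> bicyclic" "(h + 1, -h) \<in> bicyclic" "(c, d + h) \<in> bicyclic"
      using \<open>h \<ge> 1\<close> assms(4,5) by (auto simp: bicyclic_def)
    show "(h, -h) \<noteq> (h + 1, -h)" "(h, -h) \<noteq> (c, d + h)" "(h + 1, -h) \<noteq> (c, d + h)"
      using \<open>h \<ge> 1\<close> assms(5) by auto
    show "bmult (h, -h) (h + 1, -h) \<in> {(a, -a), (c, d)}"
      using bmult_diag_succ[OF \<open>h \<ge> 1\<close>] a by simp
    show "bmult (h, -h) (c, d + h) \<in> {(a, -a), (c, d)}"
      using bmult_diag_shift[of c d h] assms(5) by simp
    show "bmult (h + 1, -h) (c, d + h) \<in> {(a, -a), (c, d)}"
      using bmult_diag_succ_shift[OF assms(5)] by simp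
  qed
qed

end
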